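(* Let $A\in\mathbb{R}^{n\times n}$, $B\in\mathbb{R}^{n\times m}$, $C\in\mathbb{R}^{p\times n}$ with $(A,C)$ observable and $(A,B)$ reachable, let $\ell$ be the observability index of $(A,C)$, and let $\mathbf{A}_\ell,\mathbf{B}_\ell,H_\ell$ be as in the context. Then $\operatorname{im}H_\ell=R(\mathbf{A}_\ell,\mathbf{B}_\ell)$.
   Context: The observability index $\ell$ of an observable pair $(A,C)$ is the smallest $l$ with $\operatorname{rank}[C;CA;\dots;CA^{l-1}]=n$. Define $\mathcal{O}_\ell=[C;CA;\dots;CA^{\ell-1}]\in\mathbb{R}^{p\ell\times n}$; $\mathcal{T}_\ell\in\mathbb{R}^{p\ell\times m\ell}$ block lower triangular with $(i,j)$ block ($i,j=1,\dots,\ell$) equal to $CA^{i-j-1}B$ if $i>j$ and $0$ otherwise; $\mathcal{R}_\ell=[A^{\ell-1}B\ \cdots\ AB\ B]$; $\mathcal{O}_\ell^{L}$ a fixed left inverse ($\mathcal{O}_\ell^L\mathcal{O}_\ell=I_n$). $\mathbf{F}_\ell=\mathrm{blockdiag}(S_p,S_m)$ where $S_q\in\mathbb{R}^{q\ell\times q\ell}$ has blocks $I_q$ in block positions $(i,i+1)$, $i=1,\dots,\ell-1$, zeros elsewhere; $\mathbf{L}_\ell\in\mathbb{R}^{(p\ell+m\ell)\times p}$ has $I_p$ in rows $p\ell-p+1,\dots,p\ell$, zeros elsewhere; $\mathbf{B}_\ell\in\mathbb{R}^{(p\ell+m\ell)\times m}$ has $I_m$ in its last $m$ rows, zeros elsewhere.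 $Z_\ell=[CA^\ell\mathcal{O}_\ell^L\ \ C\mathcal{R}_\ell-CA^\ell\mathcal{O}_\ell^L\mathcal{T}_\ell]$, $\mathbf{A}_\ell=\mathbf{F}_\ell+\mathbf{L}_\ell Z_\ell$. $H_\ell=\begin{bmatrix}\mathcal{O}_\ell&\mathcal{T}_\ell\\0&I_{m\ell}\end{bmatrix}$. For a pair $(M,N)$ with $M$ of size $q\times q$, $R(M,N)=\operatorname{im}[M^{q-1}N\ \cdots\ MN\ N]$ is its reachability subspace. *)

theory Defs
  imports Jordan_Normal_Form.DL_Rank
begin

text \<open>Matrices are Jordan_Normal_Form matrices over the reals; block indices are 0-based.\<close>

definition mat_rank :: "real mat \<Rightarrow> nat" where
  "mat_rank M = vec_space.rank (dim_row M) M"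

definition im_mat :: "real mat \<Rightarrow> real vec set" where
  "im_mat M = vec_space.col_space (dim_row M) M"

text \<open>O_l = [C; CA; ...; CA^(l-1)], size (p*l) x n.\<close>
definition obs_mat :: "real mat \<Rightarrow> real mat \<Rightarrow> nat \<Rightarrow> real mat" where
  "obs_mat A C l = mat (dim_row C * l) (dim_col A)
     (\<lambda>(i,j). (C * (A ^\<^sub>m (i div dim_row C))) $$ (i mod dim_row C, j))"

text \<open>R_l = [A^(l-1)B ... AB B], size n x (m*l).\<close>
definition ctrb_mat :: "real mat \<Rightarrow> real mat \<Rightarrow> nat \<Rightarrow> real mat" where
  "ctrb_mat A B l = mat (dim_row A) (dim_col B * l)
     (\<lambda>(i,j). ((A ^\<^sub>m (l - 1 - j div dim_col B)) * B) $$ (i, j mod dim_col B))"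

text \<open>T_l: block lower triangular, block (i,j) = C A^(i-j-1) B if i > j, else 0.\<close>
definition toep_mat :: "real mat \<Rightarrow> real mat \<Rightarrow> real mat \<Rightarrow> nat \<Rightarrow> real mat" where
  "toep_mat A B C l = mat (dim_row C * l) (dim_col B * l)
     (\<lambda>(i,j). if i div dim_row C > j div dim_col B
              then (C * (A ^\<^sub>m (i div dim_row C - j div dim_col B - 1)) * B)
                     $$ (i mod dim_row C, j mod dim_col B)
              else 0)"

definition observable :: "real mat \<Rightarrow> real mat \<Rightarrow> bool" where
  "observable A C \<longleftrightarrow> mat_rank (obs_mat A C (dim_row A)) = dim_row A"

definition reachable :: "real mat \<Rightarrow> real mat \<Rightarrow> bool" where
  "reachable A B \<longleftrightarrow> mat_rank (ctrb_mat A B (dim_row A)) = dim_row A"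

definition obs_index :: "real mat \<Rightarrow> real mat \<Rightarrow> nat" where
  "obs_index A C = (LEAST l. mat_rank (obs_mat A C l) = dim_row A)"

definition reach_subspace :: "real mat \<Rightarrow> real mat \<Rightarrow> real vec set" where
  "reach_subspace M N = im_mat (ctrb_mat M N (dim_row M))"

text \<open>S_q: (q*l) x (q*l), identity blocks at block positions (i,i+1).\<close>
definition shift_mat :: "nat \<Rightarrow> nat \<Rightarrow> real mat" where
  "shift_mat q l = mat (q*l) (q*l) (\<lambda>(r,c). if c = r + q then 1 else 0)"

definition hcat :: "real mat \<Rightarrow> real mat \<Rightarrow> real mat" where
  "hcat X Y = four_block_mat X Y (0\<^sub>m 0 (dim_col X)) (0\<^sub>m 0 (dim_col Y))"

definition bF :: "nat \<Rightarrow> nat \<Rightarrow> nat \<Rightarrow> real mat" where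
  "bF p m l = four_block_mat (shift_mat p l) (0\<^sub>m (p*l) (m*l)) (0\<^sub>m (m*l) (p*l)) (shift_mat m l)"

text \<open>L_l: I_p in rows p*l-p+1..p*l (1-based).\<close>
definition bL :: "nat \<Rightarrow> nat \<Rightarrow> nat \<Rightarrow> real mat" where
  "bL p m l = mat (p*l + m*l) p (\<lambda>(r,c). if r + p = p*l + c then 1 else 0)"

text \<open>B_l: I_m in the last m rows.\<close>
definition bB :: "nat \<Rightarrow> nat \<Rightarrow> nat \<Rightarrow> real mat" where
  "bB p m l = mat (p*l + m*l) m (\<lambda>(r,c). if r + m = p*l + m*l + c then 1 else 0)"

definition bZ :: "real mat \<Rightarrow> real mat \<Rightarrow> real mat \<Rightarrow> real mat \<Rightarrow> nat \<Rightarrow> real mat" where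
  "bZ A B C OL l = hcat (C * (A ^\<^sub>m l) * OL)
       (C * ctrb_mat A B l - C * (A ^\<^sub>m l) * OL * toep_mat A B C l)"

definition bA :: "real mat \<Rightarrow> real mat \<Rightarrow> real mat \<Rightarrow> real mat \<Rightarrow> nat \<Rightarrow> real mat" where
  "bA A B C OL l = bF (dim_row C) (dim_col B) l + bL (dim_row C) (dim_col B) l * bZ A B C OL l"

definition bH :: "real mat \<Rightarrow> real mat \<Rightarrow> real mat \<Rightarrow> nat \<Rightarrow> real mat" where
  "bH A B C l = four_block_mat (obs_mat A C l) (toep_mat A B C l)
      (0\<^sub>m (dim_col B * l) (dim_col A)) (1\<^sub>m (dim_col B * l))"

end

theory Submission
  imports Defs
begin

(* A pair x @ u, with x a state of (A, B, C) and u a window of l inputs, is represented in the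
   lifted system by bH (x @ u): the stacked outputs O x + T u of the l steps from x driven by u,
   followed by u itself. One step of (bA, bB) with input v maps bH (x @ u) to bH (x' @ u'), where
   x' is the next state and u' the window shifted by v: the shift matrices drop the oldest output
   and input blocks, and the row bZ supplies the new output, recovering x from the old outputs
   through the left inverse OL. Started at 0, the lifted system is therefore at time k in
   bH (x @ u), with x the state of (A, B) at time k - l and u the last l inputs, so its reachable
   subspace lies in im bH. Conversely, since
   n <= p l and l <= m l, the p l + m l steps available leave room first to steer x to an
   arbitrary state (reachability of (A, B) in n steps) and then to fill the window with
   arbitrary inputs. *)

lemma (in vec_space) maximal_lin_indpt_cols_exists:
  "\<exists>S. maximal S (\<lambda>T. T \<subseteq> set (cols A) \<and> lin_indpt T)"
  using maximal_exists[of "\<lambda>T. T \<subseteq> set (cols A) \<and> lin_indpt T" "card (set (cols A))" "{}"]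
  by (meson List.finite_set card_mono empty_iff empty_subsetI finite_lin_indpt2 rev_finite_subset)

lemma (in vec_space) rank_le_nr:
  assumes "A \<in> carrier_mat n nc"
  shows "rank A \<le> n"
proof -
  obtain S where S: "maximal S (\<lambda>T. T \<subseteq> set (cols A) \<and> lin_indpt T)"
    using maximal_lin_indpt_cols_exists by blast
  have "S \<subseteq> carrier_vec n" "lin_indpt S"
    using S assms cols_dim unfolding maximal_def by (metis carrier_matD(1) subset_trans)+
  then have "card S \<le> dim" using li_le_dim(2)[OF fin_dim] by simp
  then show ?thesis using rank_card_indpt[OF assms S] dim_is_n by simp
qed

lemma (in vec_space) full_rank_col_space:
  assumes A: "A \<in> carrier_mat n nc" and rank: "rank A = n"
  shows "col_space A = carrier_vec n"
proof -
  obtain S where S: "maximal S (\<lambda>T. T \<subseteq> set (cols A) \<and> lin_indpt T)"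
    using maximal_lin_indpt_cols_exists by blast
  have cols: "set (cols A) \<subseteq> carrier_vec n" using A cols_dim by (metis carrier_matD(1))
  have sub: "S \<subseteq> carrier_vec n" using S cols unfolding maximal_def by blast
  have li: "lin_indpt S" using S unfolding maximal_def by blast
  have fin: "finite S" using S unfolding maximal_def by (meson List.finite_set rev_finite_subset)
  have "basis S" using dim_li_is_basis[OF fin_dim fin _ li] sub rank rank_card_indpt[OF A S] dim_is_n by simp
  then have "span S = carrier_vec n" unfolding basis_def by simp
  moreover have "span S \<subseteq> span (set (cols A))" using S unfolding maximal_def
    by (simp add: cols span_is_monotone)
  moreover have "span (set (cols A)) \<subseteq> carrier_vec n" using cols by (simp add: span_is_subset2)
  ultimately show ?thesis unfolding col_space_def by blast
qed

lemma im_mat_eq: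
  assumes "M \<in> carrier_mat r c"
  shows "im_mat M = {y \<in> carrier_vec r. \<exists>x\<in>carrier_vec c. M *\<^sub>v x = y}"
  unfolding im_mat_def using vec_space.col_space_eq[OF assms] assms by auto

lemma mult_mat_vec_mem_im_mat:
  assumes "M \<in> carrier_mat r c" and "x \<in> carrier_vec c"
  shows "M *\<^sub>v x \<in> im_mat M"
  unfolding im_mat_eq[OF assms(1)] using assms by auto

lemma im_mat_zero_rows:
  assumes "M \<in> carrier_mat 0 c"
  shows "im_mat M = carrier_vec 0"
proof -
  have "y \<in> im_mat M" if "y \<in> carrier_vec 0" for y
  proof -
    have "M *\<^sub>v 0\<^sub>v c = y" using that assms by (intro eq_vecI) auto
    then show ?thesis unfolding im_mat_eq[OF assms] using that by auto
  qed
  then show ?thesis unfolding im_mat_eq[OF assms] by auto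
qed

lemma mat_rank_le_rows: "M \<in> carrier_mat r c \<Longrightarrow> mat_rank M \<le> r"
  unfolding mat_rank_def using vec_space.rank_le_nr by auto

lemma mat_rank_le_cols: "M \<in> carrier_mat r c \<Longrightarrow> mat_rank M \<le> c"
  unfolding mat_rank_def using vec_space.rank_le_nc by auto

lemma im_mat_full_rank: "M \<in> carrier_mat r c \<Longrightarrow> mat_rank M = r \<Longrightarrow> im_mat M = carrier_vec r"
  unfolding mat_rank_def im_mat_def using vec_space.full_rank_col_space by auto

lemma mult_mat_vec_nth_sum:
  assumes "X \<in> carrier_mat r k" and "w \<in> carrier_vec k" and "i < r"
  shows "(X *\<^sub>v w) $ i = (\<Sum>c<k. X $$ (i, c) * w $ c)"
  using assms by (simp add: scalar_prod_def lessThan_atLeast0)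

lemma pow_mat_Suc_left:
  assumes "M \<in> carrier_mat k k"
  shows "M ^\<^sub>m Suc a = M * M ^\<^sub>m a"
proof (induction a)
  case (Suc a)
  have "M * M ^\<^sub>m Suc a = (M * M ^\<^sub>m a) * M"
    using assms by (simp add: assoc_mult_mat[of _ k k _ k _ k])
  then show ?case using Suc by simp
qed (use assms in simp)

lemma add_append_vec:
  assumes "a \<in> carrier_vec k1" "c \<in> carrier_vec k1" "b \<in> carrier_vec k2" "d \<in> carrier_vec k2"
  shows "(a @\<^sub>v b) + (c @\<^sub>v d) = (a + c) @\<^sub>v (b + d)"
  using assms by (intro eq_vecI) auto

lemma sum_lessThan_mult_blocks:
  fixes f :: "nat \<Rightarrow> 'a :: comm_monoid_add"
  shows "(\<Sum>c<m*k. f c) = (\<Sum>j<k. \<Sum>c<m. f (j*m + c))"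
proof -
  have "(\<Sum>c<m*k. f c) = (\<Sum>j<k. sum f {j*m..<j*m + m})"
    by (simp add: sum.nat_group mult.commute)
  also have "\<dots> = (\<Sum>j<k. \<Sum>c<m. f (j*m + c))"
  proof (rule sum.cong[OF refl])
    fix j
    show "sum f {j*m..<j*m + m} = (\<Sum>c<m. f (j*m + c))"
      using sum.shift_bounds_nat_ivl[of f 0 "j*m" m] by (simp add: add.commute atLeast0LessThan)
  qed
  finally show ?thesis .
qed

definition vec_block :: "nat \<Rightarrow> 'a vec \<Rightarrow> nat \<Rightarrow> 'a vec" where
  "vec_block m u j = vec m (\<lambda>c. u $ (j*m + c))"

definition concat_blocks :: "nat \<Rightarrow> (nat \<Rightarrow> 'a vec) \<Rightarrow> nat \<Rightarrow> 'a vec" where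
  "concat_blocks m vs k = vec (m*k) (\<lambda>i. vs (i div m) $ (i mod m))"

definition shift_in :: "nat \<Rightarrow> nat \<Rightarrow> 'a vec \<Rightarrow> 'a vec \<Rightarrow> 'a vec" where
  "shift_in q l y z = vec (q*l) (\<lambda>i. if i + q < q*l then y $ (i + q) else z $ (i + q - q*l))"

lemma vec_block_carrier[simp]: "vec_block m u j \<in> carrier_vec m"
  unfolding vec_block_def by simp

lemma concat_blocks_carrier[simp]: "concat_blocks m vs k \<in> carrier_vec (m*k)"
  unfolding concat_blocks_def by simp

lemma shift_in_carrier[simp]: "shift_in q l y z \<in> carrier_vec (q*l)"
  unfolding shift_in_def by simp

lemma dim_vec_shift_in[simp]: "dim_vec (shift_in q l y z) = q*l"
  unfolding shift_in_def by simp

lemma concat_blocks_vec_block: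
  assumes "u \<in> carrier_vec (m*k)"
  shows "concat_blocks m (vec_block m u) k = u"
proof (rule eq_vecI)
  fix i assume "i < dim_vec u"
  then have "i < m*k" using assms by simp
  then have "0 < m" by (cases m) auto
  then show "concat_blocks m (vec_block m u) k $ i = u $ i"
    using \<open>i < m*k\<close> unfolding concat_blocks_def vec_block_def by simp
qed (use assms in \<open>simp add: concat_blocks_def\<close>)

lemma vec_block_shift_in:
  assumes "Suc j < l"
  shows "vec_block q (shift_in q l u v) j = vec_block q u (Suc j)"
proof (rule eq_vecI)
  fix c assume "c < dim_vec (vec_block q u (Suc j))"
  then have c: "c < q" by (simp add: vec_block_def)
  have "(j + 2) * q \<le> l * q" using assms by (intro mult_le_mono1) simp
  then have "j*q + c + q < q*l" using c by (simp add: algebra_simps)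
  then show "vec_block q (shift_in q l u v) j $ c = vec_block q u (Suc j) $ c"
    using c by (simp add: vec_block_def shift_in_def algebra_simps)
qed (simp add: vec_block_def)

lemma shift_in_add:
  assumes "y \<in> carrier_vec (q*l)" "y' \<in> carrier_vec (q*l)" "z \<in> carrier_vec q" "z' \<in> carrier_vec q"
  shows "shift_in q l y z + shift_in q l y' z' = shift_in q l (y + y') (z + z')"
  using assms by (intro eq_vecI) (auto simp: shift_in_def)

lemma div_mod_last_block:
  fixes i q l :: nat
  assumes "i < q*l" and "\<not> i + q < q*l"
  shows "i div q = l - 1" and "i mod q = i + q - q*l"
proof -
  have "0 < l" using assms(1) by (cases l) auto
  then have "q*l = (l - 1) * q + q" by (cases l) (auto simp: algebra_simps)
  then have i: "i = (i + q - q*l) + (l - 1) * q" and r: "i + q - q*l < q"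
    using assms by linarith+
  show "i div q = l - 1" by (subst i) (use r in simp)
  show "i mod q = i + q - q*l" by (subst i) (use r in simp)
qed

fun trajectory :: "'a :: comm_ring_1 mat \<Rightarrow> 'a mat \<Rightarrow> 'a vec \<Rightarrow> (nat \<Rightarrow> 'a vec) \<Rightarrow> nat \<Rightarrow> 'a vec" where
  "trajectory M N x vs 0 = x"
| "trajectory M N x vs (Suc k) = M *\<^sub>v trajectory M N x vs k + N *\<^sub>v vs k"

lemma trajectory_carrier:
  assumes "M \<in> carrier_mat k k" "N \<in> carrier_mat k m" "x \<in> carrier_vec k" "\<And>j. vs j \<in> carrier_vec m"
  shows "trajectory M N x vs t \<in> carrier_vec k"
  using assms by (induction t) auto

lemma trajectory_cong:
  "(\<And>j. j < t \<Longrightarrow> vs j = ws j) \<Longrightarrow> trajectory M N x vs t = trajectory M N x ws t"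
  by (induction t) auto

lemma trajectory_add:
  "trajectory M N x vs (d + t) = trajectory M N (trajectory M N x vs d) (\<lambda>j. vs (d + j)) t"
  by (induction t) auto

lemma trajectory_zero_inputs:
  assumes "M \<in> carrier_mat k k" "N \<in> carrier_mat k m" "\<And>j. j < t \<Longrightarrow> vs j = 0\<^sub>v m"
  shows "trajectory M N (0\<^sub>v k) vs t = 0\<^sub>v k"
  using assms(3) by (induction t) (use assms(1,2) in auto)

lemma trajectory_zero_prefix:
  assumes "M \<in> carrier_mat k k" "N \<in> carrier_mat k m" "\<And>j. j < d \<Longrightarrow> vs j = 0\<^sub>v m"
  shows "trajectory M N (0\<^sub>v k) vs (d + t) = trajectory M N (0\<^sub>v k) (\<lambda>j. vs (d + j)) t"
  using trajectory_add[of M N "0\<^sub>v k" vs d t] trajectory_zero_inputs[OF assms] by simp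

lemma trajectory_shift_in:
  assumes "k < l"
  shows "trajectory M N (M *\<^sub>v x + N *\<^sub>v vec_block m u 0) (vec_block m (shift_in m l u v)) k
    = trajectory M N x (vec_block m u) (Suc k)"
proof -
  have "trajectory M N x (vec_block m u) (Suc k)
      = trajectory M N (M *\<^sub>v x + N *\<^sub>v vec_block m u 0) (\<lambda>j. vec_block m u (Suc j)) k"
    using trajectory_add[of M N x "vec_block m u" 1 k] by simp
  also have "\<dots> = trajectory M N (M *\<^sub>v x + N *\<^sub>v vec_block m u 0) (vec_block m (shift_in m l u v)) k"
    using assms by (intro trajectory_cong) (simp add: vec_block_shift_in)
  finally show ?thesis by simp
qed

lemma trajectory_superposition:
  assumes M: "M \<in> carrier_mat k k" and N: "N \<in> carrier_mat k m" and x: "x \<in> carrier_vec k"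
    and vs: "\<And>j. vs j \<in> carrier_vec m"
  shows "trajectory M N x vs t = M ^\<^sub>m t *\<^sub>v x + trajectory M N (0\<^sub>v k) vs t"
proof (induction t)
  case (Suc t)
  have Mt: "M ^\<^sub>m t *\<^sub>v x \<in> carrier_vec k" using mult_mat_vec_carrier[OF pow_carrier_mat[OF M] x] .
  have z: "trajectory M N (0\<^sub>v k) vs t \<in> carrier_vec k"
    using trajectory_carrier[OF M N zero_carrier_vec vs] .
  have "trajectory M N x vs (Suc t) = M *\<^sub>v (M ^\<^sub>m t *\<^sub>v x) + M *\<^sub>v trajectory M N (0\<^sub>v k) vs t + N *\<^sub>v vs t"
    using Suc mult_add_distrib_mat_vec[OF M Mt z] by simp
  also have "M *\<^sub>v (M ^\<^sub>m t *\<^sub>v x) = M ^\<^sub>m Suc t *\<^sub>v x"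
    using assoc_mult_mat_vec[OF M pow_carrier_mat[OF M] x] pow_mat_Suc_left[OF M] by simp
  finally show ?case
    using M N vs[of t] z mult_mat_vec_carrier[OF pow_carrier_mat[OF M] x, of "Suc t"] by simp
qed (use M x in simp)

lemma trajectory_mult_nth:
  assumes M: "M \<in> carrier_mat k k" and N: "N \<in> carrier_mat k m" and x: "x \<in> carrier_vec k"
    and vs: "\<And>j. vs j \<in> carrier_vec m" and L: "L \<in> carrier_mat r k" and i: "i < r"
  shows "(L *\<^sub>v trajectory M N x vs t) $ i =
    ((L * M ^\<^sub>m t) *\<^sub>v x) $ i + (\<Sum>j<t. ((L * M ^\<^sub>m (t - 1 - j) * N) *\<^sub>v vs j) $ i)"
  using L
proof (induction t arbitrary: L)
  case 0
  then show ?case using M x by simp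
next
  case (Suc t)
  have LM: "L * M \<in> carrier_mat r k" using Suc.prems M by simp
  have LM_pow: "L * M * M ^\<^sub>m a = L * M ^\<^sub>m Suc a" for a
    by (subst pow_mat_Suc_left[OF M]) (use Suc.prems M in \<open>simp add: assoc_mult_mat[of L r k M k _ k]\<close>)
  have traj: "trajectory M N x vs t \<in> carrier_vec k" using trajectory_carrier[OF M N x vs] .
  have "(L *\<^sub>v trajectory M N x vs (Suc t)) $ i
      = ((L * M) *\<^sub>v trajectory M N x vs t) $ i + ((L * N) *\<^sub>v vs t) $ i"
    using Suc.prems M N traj vs[of t] i
    by (simp add: mult_add_distrib_mat_vec[of L r k] assoc_mult_mat_vec[of L r k])
  also have "((L * M) *\<^sub>v trajectory M N x vs t) $ i = ((L * M ^\<^sub>m Suc t) *\<^sub>v x) $ i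
      + (\<Sum>j<t. ((L * M ^\<^sub>m (Suc t - 1 - j) * N) *\<^sub>v vs j) $ i)"
    unfolding Suc.IH[OF LM] LM_pow
    by (intro arg_cong2[where f = "(+)"] sum.cong refl) (simp_all add: Suc_diff_Suc)
  also have "L * N = L * M ^\<^sub>m (Suc t - 1 - t) * N"
    using Suc.prems M N by simp
  finally show ?case by simp
qed

lemma ctrb_mat_mult_concat_blocks:
  assumes M: "M \<in> carrier_mat k k" and N: "N \<in> carrier_mat k m" and vs: "\<And>j. vs j \<in> carrier_vec m"
  shows "ctrb_mat M N t *\<^sub>v concat_blocks m vs t = trajectory M N (0\<^sub>v k) vs t"
proof (rule eq_vecI)
  have traj: "trajectory M N (0\<^sub>v k) vs t \<in> carrier_vec k"
    using trajectory_carrier[OF M N _ vs] by simp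
  then show "dim_vec (ctrb_mat M N t *\<^sub>v concat_blocks m vs t) = dim_vec (trajectory M N (0\<^sub>v k) vs t)"
    using M unfolding ctrb_mat_def by simp
  fix i assume "i < dim_vec (trajectory M N (0\<^sub>v k) vs t)"
  then have i: "i < k" using traj by simp
  have "(ctrb_mat M N t *\<^sub>v concat_blocks m vs t) $ i =
      (\<Sum>c<m*t. (M ^\<^sub>m (t - 1 - c div m) * N) $$ (i, c mod m) * vs (c div m) $ (c mod m))"
    using i M N unfolding ctrb_mat_def concat_blocks_def
    by (simp add: scalar_prod_def lessThan_atLeast0 mult.commute)
  also have "\<dots> = (\<Sum>j<t. \<Sum>c<m. (M ^\<^sub>m (t - 1 - j) * N) $$ (i, c) * vs j $ c)"
    unfolding sum_lessThan_mult_blocks by (intro sum.cong refl) auto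
  also have "\<dots> = (\<Sum>j<t. ((1\<^sub>m k * M ^\<^sub>m (t - 1 - j) * N) *\<^sub>v vs j) $ i)"
  proof (intro sum.cong refl)
    fix j
    have X: "M ^\<^sub>m (t - 1 - j) * N \<in> carrier_mat k m" using mult_carrier_mat[OF pow_carrier_mat[OF M] N] .
    have "1\<^sub>m k * M ^\<^sub>m (t - 1 - j) * N = M ^\<^sub>m (t - 1 - j) * N" using M N by simp
    then show "(\<Sum>c<m. (M ^\<^sub>m (t - 1 - j) * N) $$ (i, c) * vs j $ c) =
        ((1\<^sub>m k * M ^\<^sub>m (t - 1 - j) * N) *\<^sub>v vs j) $ i"
      using mult_mat_vec_nth_sum[OF X vs i, symmetric] by simp
  qed
  also have "\<dots> = (1\<^sub>m k *\<^sub>v trajectory M N (0\<^sub>v k) vs t) $ i"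
    using trajectory_mult_nth[OF M N _ vs one_carrier_mat i] M i by simp
  finally show "(ctrb_mat M N t *\<^sub>v concat_blocks m vs t) $ i = trajectory M N (0\<^sub>v k) vs t $ i"
    using traj by simp
qed

lemma ctrb_mat_carrier_mat: "ctrb_mat M N k \<in> carrier_mat (dim_row M) (dim_col N * k)"
  unfolding ctrb_mat_def by simp

lemma ctrb_mat_mult_vec:
  assumes "M \<in> carrier_mat k k" and "N \<in> carrier_mat k m" and "u \<in> carrier_vec (m*t)"
  shows "ctrb_mat M N t *\<^sub>v u = trajectory M N (0\<^sub>v k) (vec_block m u) t"
  using ctrb_mat_mult_concat_blocks[where vs = "vec_block m u", OF assms(1,2) vec_block_carrier, of t]
    concat_blocks_vec_block[OF assms(3)]
  by simp

lemma reach_subspace_eq_trajectories: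
  assumes M: "M \<in> carrier_mat q q" and N: "N \<in> carrier_mat q m"
  shows "reach_subspace M N = {trajectory M N (0\<^sub>v q) vs q | vs. \<forall>j. vs j \<in> carrier_vec m}"
proof -
  have K: "ctrb_mat M N q \<in> carrier_mat q (m*q)"
    using M N ctrb_mat_carrier_mat[of M N q] by simp
  have R: "reach_subspace M N = {y \<in> carrier_vec q. \<exists>z\<in>carrier_vec (m*q). ctrb_mat M N q *\<^sub>v z = y}"
    using M by (simp add: reach_subspace_def im_mat_eq[OF K])
  show ?thesis unfolding R
  proof (intro equalityI subsetI)
    fix y assume "y \<in> {y \<in> carrier_vec q. \<exists>z\<in>carrier_vec (m*q). ctrb_mat M N q *\<^sub>v z = y}"
    then obtain z where "z \<in> carrier_vec (m*q)" "y = ctrb_mat M N q *\<^sub>v z" by blast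
    then have "y = trajectory M N (0\<^sub>v q) (vec_block m z) q"
      using ctrb_mat_mult_vec[OF M N] by simp
    then show "y \<in> {trajectory M N (0\<^sub>v q) vs q | vs. \<forall>j. vs j \<in> carrier_vec m}" by auto
  next
    fix y assume "y \<in> {trajectory M N (0\<^sub>v q) vs q | vs. \<forall>j. vs j \<in> carrier_vec m}"
    then obtain vs where vs: "\<And>j. vs j \<in> carrier_vec m" and y: "y = trajectory M N (0\<^sub>v q) vs q"
      by blast
    have "y \<in> carrier_vec q" using trajectory_carrier[OF M N _ vs] y by simp
    moreover have "ctrb_mat M N q *\<^sub>v concat_blocks m vs q = y"
      using ctrb_mat_mult_concat_blocks[OF M N vs] y by simp
    ultimately show "y \<in> {y \<in> carrier_vec q. \<exists>z\<in>carrier_vec (m*q). ctrb_mat M N q *\<^sub>v z = y}"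
      using concat_blocks_carrier by blast
  qed
qed

lemma shift_mat_carrier: "shift_mat q l \<in> carrier_mat (q*l) (q*l)"
  by (simp add: shift_mat_def)

lemma bF_carrier: "bF p m l \<in> carrier_mat (p*l + m*l) (p*l + m*l)"
  unfolding bF_def by (rule four_block_carrier_mat[OF shift_mat_carrier shift_mat_carrier])

lemma bL_carrier: "bL p m l \<in> carrier_mat (p*l + m*l) p"
  by (simp add: bL_def)

lemma bB_carrier: "bB p m l \<in> carrier_mat (p*l + m*l) m"
  by (simp add: bB_def)

lemma hcat_carrier:
  "X \<in> carrier_mat r k1 \<Longrightarrow> Y \<in> carrier_mat r k2 \<Longrightarrow> hcat X Y \<in> carrier_mat r (k1 + k2)"
  unfolding hcat_def using four_block_carrier_mat[of X r k1 "0\<^sub>m 0 (dim_col Y)" 0 k2] by auto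

lemma hcat_mult_append_vec:
  assumes X: "X \<in> carrier_mat r k1" and Y: "Y \<in> carrier_mat r k2"
    and a: "a \<in> carrier_vec k1" and d: "d \<in> carrier_vec k2"
  shows "hcat X Y *\<^sub>v (a @\<^sub>v d) = X *\<^sub>v a + Y *\<^sub>v d"
proof -
  have "hcat X Y *\<^sub>v (a @\<^sub>v d) = (X *\<^sub>v a + Y *\<^sub>v d) @\<^sub>v (0\<^sub>m 0 k1 *\<^sub>v a + 0\<^sub>m 0 k2 *\<^sub>v d)"
    using four_block_mat_mult_vec[OF X Y zero_carrier_mat zero_carrier_mat a d] X Y
    unfolding hcat_def by simp
  also have "\<dots> = X *\<^sub>v a + Y *\<^sub>v d"
    using X Y by (intro eq_vecI) auto
  finally show ?thesis .
qed

lemma shift_mat_mult_vec: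
  assumes y: "y \<in> carrier_vec (q*l)"
  shows "shift_mat q l *\<^sub>v y = shift_in q l y (0\<^sub>v q)"
proof (rule eq_vecI)
  fix i assume "i < dim_vec (shift_in q l y (0\<^sub>v q))"
  then have i: "i < q*l" by simp
  have "(shift_mat q l *\<^sub>v y) $ i = (\<Sum>c<q*l. (if c = i + q then 1 else 0) * y $ c)"
    using mult_mat_vec_nth_sum[OF shift_mat_carrier y i] i by (simp add: shift_mat_def)
  also have "\<dots> = (\<Sum>c<q*l. if i + q = c then y $ c else 0)"
    by (intro sum.cong refl) auto
  also have "\<dots> = shift_in q l y (0\<^sub>v q) $ i"
    using i by (simp add: shift_in_def)
  finally show "(shift_mat q l *\<^sub>v y) $ i = shift_in q l y (0\<^sub>v q) $ i" .
qed (simp add: shift_mat_def)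

lemma bL_mult_vec:
  assumes z: "z \<in> carrier_vec p"
  shows "bL p m l *\<^sub>v z = shift_in p l (0\<^sub>v (p*l)) z @\<^sub>v 0\<^sub>v (m*l)"
proof (rule eq_vecI)
  fix i assume "i < dim_vec (shift_in p l (0\<^sub>v (p*l)) z @\<^sub>v 0\<^sub>v (m*l))"
  then have i: "i < p*l + m*l" by simp
  have "(bL p m l *\<^sub>v z) $ i = (\<Sum>c<p. (if i + p = p*l + c then 1 else 0) * z $ c)"
    using mult_mat_vec_nth_sum[OF bL_carrier z i] i by (simp add: bL_def)
  also have "\<dots> = (\<Sum>c<p. if i + p - p*l = c \<and> p*l \<le> i + p then z $ c else 0)"
    by (intro sum.cong refl) auto
  also have "\<dots> = (shift_in p l (0\<^sub>v (p*l)) z @\<^sub>v 0\<^sub>v (m*l)) $ i"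
    using i by (cases "p*l \<le> i + p") (auto simp: shift_in_def)
  finally show "(bL p m l *\<^sub>v z) $ i = (shift_in p l (0\<^sub>v (p*l)) z @\<^sub>v 0\<^sub>v (m*l)) $ i" .
qed (simp add: bL_def)

lemma bB_mult_vec:
  assumes v: "v \<in> carrier_vec m"
  shows "bB p m l *\<^sub>v v = 0\<^sub>v (p*l) @\<^sub>v shift_in m l (0\<^sub>v (m*l)) v"
proof (rule eq_vecI)
  fix i assume "i < dim_vec (0\<^sub>v (p*l) @\<^sub>v shift_in m l (0\<^sub>v (m*l)) v)"
  then have i: "i < p*l + m*l" by simp
  have "(bB p m l *\<^sub>v v) $ i = (\<Sum>c<m. (if i + m = p*l + m*l + c then 1 else 0) * v $ c)"
    using mult_mat_vec_nth_sum[OF bB_carrier v i] i by (simp add: bB_def)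
  also have "\<dots> = (\<Sum>c<m. if i + m - (p*l + m*l) = c \<and> p*l + m*l \<le> i + m then v $ c else 0)"
    by (intro sum.cong refl) auto
  also have "\<dots> = (0\<^sub>v (p*l) @\<^sub>v shift_in m l (0\<^sub>v (m*l)) v) $ i"
  proof (cases "i < p*l")
    case True
    then have "0 < l" by (cases l) auto
    then have "\<not> p*l + m*l \<le> i + m" using True by (cases l) auto
    then show ?thesis using True by simp
  next
    case False
    then show ?thesis using i by (cases "p*l + m*l \<le> i + m") (auto simp: shift_in_def)
  qed
  finally show "(bB p m l *\<^sub>v v) $ i = (0\<^sub>v (p*l) @\<^sub>v shift_in m l (0\<^sub>v (m*l)) v) $ i" .
qed (simp add: bB_def)

lemma bF_bL_bB_mult_vec:
  assumes y: "y \<in> carrier_vec (p*l)" and u: "u \<in> carrier_vec (m*l)"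
    and z: "z \<in> carrier_vec p" and v: "v \<in> carrier_vec m"
  shows "bF p m l *\<^sub>v (y @\<^sub>v u) + bL p m l *\<^sub>v z + bB p m l *\<^sub>v v
    = shift_in p l y z @\<^sub>v shift_in m l u v"
proof -
  have "bF p m l *\<^sub>v (y @\<^sub>v u) = shift_in p l y (0\<^sub>v p) @\<^sub>v shift_in m l u (0\<^sub>v m)"
    unfolding bF_def mult_mat_vec_split[OF shift_mat_carrier shift_mat_carrier y u]
    by (simp add: shift_mat_mult_vec y u)
  moreover have "shift_in p l y (0\<^sub>v p) + shift_in p l (0\<^sub>v (p*l)) z + 0\<^sub>v (p*l) = shift_in p l y z"
    using y z by (simp add: shift_in_add)
  moreover have "shift_in m l u (0\<^sub>v m) + 0\<^sub>v (m*l) + shift_in m l (0\<^sub>v (m*l)) v = shift_in m l u v"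
    using u v by (simp add: shift_in_add)
  ultimately show ?thesis
    using y u z v by (simp add: bL_mult_vec bB_mult_vec add_append_vec[of _ "p*l" _ _ "m*l"])
qed

text \<open>The window of the last l inputs before time k; inputs before time 0 count as zero.\<close>
definition input_window :: "nat \<Rightarrow> nat \<Rightarrow> (nat \<Rightarrow> 'a :: zero vec) \<Rightarrow> nat \<Rightarrow> 'a vec" where
  "input_window m l vs k =
     vec (m*l) (\<lambda>i. if l \<le> k + i div m then vs (k + i div m - l) $ (i mod m) else 0)"

lemma input_window_carrier[simp]: "input_window m l vs k \<in> carrier_vec (m*l)"
  unfolding input_window_def by simp

lemma input_window_0: "input_window m l vs 0 = 0\<^sub>v (m*l)"
proof (rule eq_vecI)
  fix i assume "i < dim_vec (0\<^sub>v (m*l))"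
  then have "i < m*l" by simp
  moreover from this have "i div m < l" by (simp add: less_mult_imp_div_less mult.commute)
  ultimately show "input_window m l vs 0 $ i = 0\<^sub>v (m*l) $ i"
    unfolding input_window_def by simp
qed (simp add: input_window_def)

lemma vec_block_input_window_0:
  assumes "0 < l" and vs: "\<And>j. vs j \<in> carrier_vec m"
  shows "vec_block m (input_window m l vs k) 0 = (if l \<le> k then vs (k - l) else 0\<^sub>v m)"
proof (rule eq_vecI)
  fix c assume "c < dim_vec (if l \<le> k then vs (k - l) else 0\<^sub>v m)"
  then have "c < m" using vs[of "k - l"] by (auto split: if_splits)
  moreover have "m \<le> m*l" using \<open>0 < l\<close> by simp
  ultimately have "c < m*l" by linarith
  with \<open>c < m\<close> show "vec_block m (input_window m l vs k) 0 $ c = (if l \<le> k then vs (k - l) else 0\<^sub>v m) $ c"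
    unfolding vec_block_def input_window_def by simp
qed (use vs[of "k - l"] in \<open>auto simp: vec_block_def\<close>)

lemma shift_in_input_window:
  assumes "0 < l"
  shows "shift_in m l (input_window m l vs k) (vs k) = input_window m l vs (Suc k)"
proof (rule eq_vecI)
  fix i assume "i < dim_vec (input_window m l vs (Suc k))"
  then have i: "i < m*l" by (simp add: input_window_def)
  then have "0 < m" by (cases m) auto
  show "shift_in m l (input_window m l vs k) (vs k) $ i = input_window m l vs (Suc k) $ i"
  proof (cases "i + m < m*l")
    case True
    have "(i + m) div m = Suc (i div m)" "(i + m) mod m = i mod m" using \<open>0 < m\<close> by simp_all
    then show ?thesis using True i unfolding shift_in_def input_window_def by simp
  next
    case False
    then show ?thesis
      using i div_mod_last_block[OF i False] \<open>0 < l\<close> unfolding shift_in_def input_window_def by simp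
  qed
qed (simp add: input_window_def)

lemma input_window_eq:
  assumes "l \<le> k" and u: "u \<in> carrier_vec (m*l)" and vs: "\<And>j. j < l \<Longrightarrow> vs (k - l + j) = vec_block m u j"
  shows "input_window m l vs k = u"
proof (rule eq_vecI)
  fix i assume "i < dim_vec u"
  then have i: "i < m*l" using u by simp
  then have "0 < m" and "i div m < l" by (cases m, auto simp: less_mult_imp_div_less mult.commute)
  then show "input_window m l vs k $ i = u $ i"
    using i vs[of "i div m"] \<open>l \<le> k\<close> unfolding input_window_def vec_block_def by simp
qed (use u in \<open>simp add: input_window_def\<close>)

locale lti_system =
  fixes A B C :: "real mat" and n m p :: nat
  assumes A_carrier: "A \<in> carrier_mat n n"
    and B_carrier: "B \<in> carrier_mat n m"
    and C_carrier: "C \<in> carrier_mat p n"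
begin

lemma dims [simp]:
  "dim_row A = n" "dim_col A = n" "dim_row B = n" "dim_col B = m" "dim_row C = p" "dim_col C = n"
  using A_carrier B_carrier C_carrier by auto

lemma obs_mat_carrier: "obs_mat A C l \<in> carrier_mat (p*l) n"
  unfolding obs_mat_def by simp

lemma toep_mat_carrier: "toep_mat A B C l \<in> carrier_mat (p*l) (m*l)"
  unfolding toep_mat_def by simp

lemma ctrb_mat_carrier: "ctrb_mat A B l \<in> carrier_mat n (m*l)"
  using ctrb_mat_carrier_mat[of A B l] by simp

lemma obs_mat_mult_vec_nth:
  assumes i: "i < p*l" and x: "x \<in> carrier_vec n"
  shows "(obs_mat A C l *\<^sub>v x) $ i = ((C * A ^\<^sub>m (i div p)) *\<^sub>v x) $ (i mod p)"
proof -
  have "0 < p" using i by (cases p) auto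
  then have r: "i mod p < p" by simp
  have CA: "C * A ^\<^sub>m (i div p) \<in> carrier_mat p n"
    using mult_carrier_mat[OF C_carrier pow_carrier_mat[OF A_carrier]] .
  have "(obs_mat A C l *\<^sub>v x) $ i = (\<Sum>c<n. obs_mat A C l $$ (i, c) * x $ c)"
    by (rule mult_mat_vec_nth_sum[OF obs_mat_carrier x i])
  also have "\<dots> = (\<Sum>c<n. (C * A ^\<^sub>m (i div p)) $$ (i mod p, c) * x $ c)"
    using i unfolding obs_mat_def by (intro sum.cong refl) simp
  also have "\<dots> = ((C * A ^\<^sub>m (i div p)) *\<^sub>v x) $ (i mod p)"
    by (rule mult_mat_vec_nth_sum[OF CA x r, symmetric])
  finally show ?thesis .
qed

lemma toep_mat_mult_vec_nth:
  assumes i: "i < p*l" and u: "u \<in> carrier_vec (m*l)"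
  shows "(toep_mat A B C l *\<^sub>v u) $ i =
    (\<Sum>j<i div p. ((C * A ^\<^sub>m (i div p - 1 - j) * B) *\<^sub>v vec_block m u j) $ (i mod p))"
proof -
  let ?k = "i div p" and ?r = "i mod p"
  let ?X = "\<lambda>j. C * A ^\<^sub>m (?k - 1 - j) * B"
  have "0 < p" using i by (cases p) auto
  then have r: "?r < p" and k: "?k < l"
    using i by (simp_all add: less_mult_imp_div_less mult.commute)
  have X: "?X j \<in> carrier_mat p m" for j
    using mult_carrier_mat[OF mult_carrier_mat[OF C_carrier pow_carrier_mat[OF A_carrier]] B_carrier] .
  have "(toep_mat A B C l *\<^sub>v u) $ i = (\<Sum>c<m*l. toep_mat A B C l $$ (i, c) * u $ c)"
    by (rule mult_mat_vec_nth_sum[OF toep_mat_carrier u i])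
  also have "\<dots> = (\<Sum>c<m*l. (if c div m < ?k then ?X (c div m) $$ (?r, c mod m) else 0) * u $ c)"
    using i unfolding toep_mat_def by (intro sum.cong refl) (simp add: diff_commute[of ?k _ 1])
  also have "\<dots> = (\<Sum>j<l. \<Sum>c<m. (if j < ?k then ?X j $$ (?r, c) else 0) * vec_block m u j $ c)"
    unfolding sum_lessThan_mult_blocks by (intro sum.cong refl) (auto simp: vec_block_def)
  also have "\<dots> = (\<Sum>j<l. if j < ?k then (?X j *\<^sub>v vec_block m u j) $ ?r else 0)"
    by (intro sum.cong refl) (use mult_mat_vec_nth_sum[OF X vec_block_carrier r] in simp)
  also have "\<dots> = (\<Sum>j<?k. (?X j *\<^sub>v vec_block m u j) $ ?r)"
  proof -
    have "{j \<in> {..<l}. j < ?k} = {..<?k}" using k by auto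
    then show ?thesis by (simp add: sum.inter_filter[symmetric])
  qed
  finally show ?thesis .
qed

lemma output_stack_nth:
  assumes i: "i < p*l" and x: "x \<in> carrier_vec n" and u: "u \<in> carrier_vec (m*l)"
  shows "(obs_mat A C l *\<^sub>v x + toep_mat A B C l *\<^sub>v u) $ i
    = (C *\<^sub>v trajectory A B x (vec_block m u) (i div p)) $ (i mod p)"
proof -
  have "0 < p" using i by (cases p) auto
  then have r: "i mod p < p" by simp
  have "(obs_mat A C l *\<^sub>v x + toep_mat A B C l *\<^sub>v u) $ i
      = (obs_mat A C l *\<^sub>v x) $ i + (toep_mat A B C l *\<^sub>v u) $ i"
    using i obs_mat_carrier[of l] toep_mat_carrier[of l] by simp
  also have "\<dots> = ((C * A ^\<^sub>m (i div p)) *\<^sub>v x) $ (i mod p) + (\<Sum>j<i div p.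
      ((C * A ^\<^sub>m (i div p - 1 - j) * B) *\<^sub>v vec_block m u j) $ (i mod p))"
    by (simp only: obs_mat_mult_vec_nth[OF i x] toep_mat_mult_vec_nth[OF i u])
  also have "\<dots> = (C *\<^sub>v trajectory A B x (vec_block m u) (i div p)) $ (i mod p)"
    by (rule trajectory_mult_nth[OF A_carrier B_carrier x vec_block_carrier C_carrier r, symmetric])
  finally show ?thesis .
qed

lemma shift_in_output_stack:
  assumes x: "x \<in> carrier_vec n" and u: "u \<in> carrier_vec (m*l)" and v: "v \<in> carrier_vec m"
  defines "x' \<equiv> A *\<^sub>v x + B *\<^sub>v vec_block m u 0" and "u' \<equiv> shift_in m l u v"
  shows "shift_in p l (obs_mat A C l *\<^sub>v x + toep_mat A B C l *\<^sub>v u) (C *\<^sub>v trajectory A B x (vec_block m u) l)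
    = obs_mat A C l *\<^sub>v x' + toep_mat A B C l *\<^sub>v u'"
proof (rule eq_vecI)
  have x': "x' \<in> carrier_vec n" and u': "u' \<in> carrier_vec (m*l)"
    using x A_carrier B_carrier unfolding x'_def u'_def by simp_all
  fix i assume "i < dim_vec (obs_mat A C l *\<^sub>v x' + toep_mat A B C l *\<^sub>v u')"
  then have i: "i < p*l" using toep_mat_carrier[of l] by simp
  then have "0 < p" by (cases p) auto
  have k: "i div p < l" using i \<open>0 < p\<close> by (simp add: less_mult_imp_div_less mult.commute)
  have "trajectory A B x' (vec_block m u') (i div p) = trajectory A B x (vec_block m u) (Suc (i div p))"
    unfolding x'_def u'_def by (rule trajectory_shift_in[OF k])
  then have "(obs_mat A C l *\<^sub>v x' + toep_mat A B C l *\<^sub>v u') $ i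
      = (C *\<^sub>v trajectory A B x (vec_block m u) (Suc (i div p))) $ (i mod p)"
    using output_stack_nth[OF i x' u'] by simp
  also have "\<dots> = shift_in p l (obs_mat A C l *\<^sub>v x + toep_mat A B C l *\<^sub>v u)
      (C *\<^sub>v trajectory A B x (vec_block m u) l) $ i"
  proof (cases "i + p < p*l")
    case True
    have "(i + p) div p = Suc (i div p)" "(i + p) mod p = i mod p" using \<open>0 < p\<close> by simp_all
    then show ?thesis using i True output_stack_nth[OF True x u] by (simp add: shift_in_def)
  next
    case False
    then show ?thesis
      using i div_mod_last_block[OF i False] k by (simp add: shift_in_def)
  qed
  finally show "shift_in p l (obs_mat A C l *\<^sub>v x + toep_mat A B C l *\<^sub>v u)
      (C *\<^sub>v trajectory A B x (vec_block m u) l) $ i = (obs_mat A C l *\<^sub>v x' + toep_mat A B C l *\<^sub>v u') $ i"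
    by simp
qed (use toep_mat_carrier[of l] in simp)

lemma obs_index_rank:
  assumes "observable A C"
  shows "mat_rank (obs_mat A C (obs_index A C)) = n"
  using LeastI[of "\<lambda>l. mat_rank (obs_mat A C l) = n" n] assms
  unfolding obs_index_def observable_def by simp

lemma obs_index_bound:
  assumes "observable A C" and "reachable A B"
  shows "n + obs_index A C \<le> p * obs_index A C + m * obs_index A C"
proof -
  let ?l = "obs_index A C"
  have "n \<le> p * ?l"
    using mat_rank_le_rows[OF obs_mat_carrier] obs_index_rank[OF assms(1)] by metis
  moreover have "?l \<le> m * ?l"
  proof (cases "n = 0")
    case True
    then have "mat_rank (obs_mat A C 0) = n"
      using mat_rank_le_rows[OF obs_mat_carrier, of 0] by simp
    then have "?l = 0"
      unfolding obs_index_def dims by (rule Least_eq_0)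
    then show ?thesis by simp
  next
    case False
    have "n \<le> m * n"
      using mat_rank_le_cols[OF ctrb_mat_carrier, of n] assms(2) unfolding reachable_def by simp
    then show ?thesis using False by (cases "m = 0") auto
  qed
  ultimately show ?thesis by (simp add: add_le_mono)
qed

end

locale lifted_system = lti_system +
  fixes OL :: "real mat" and l :: nat
  assumes OL_carrier: "OL \<in> carrier_mat n (p*l)"
    and OL_obs_mat: "OL * obs_mat A C l = 1\<^sub>m n"
begin

lemma bH_carrier: "bH A B C l \<in> carrier_mat (p*l + m*l) (n + m*l)"
  unfolding bH_def using four_block_carrier_mat[OF obs_mat_carrier one_carrier_mat] by simp

lemma bZ_carrier: "bZ A B C OL l \<in> carrier_mat p (p*l + m*l)"
proof -
  have P: "C * A ^\<^sub>m l * OL \<in> carrier_mat p (p*l)"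
    using mult_carrier_mat[OF mult_carrier_mat[OF C_carrier pow_carrier_mat[OF A_carrier]] OL_carrier] .
  have "C * ctrb_mat A B l - C * A ^\<^sub>m l * OL * toep_mat A B C l \<in> carrier_mat p (m*l)"
    by (rule minus_carrier_mat[OF mult_carrier_mat[OF P toep_mat_carrier]])
  then show ?thesis unfolding bZ_def by (rule hcat_carrier[OF P])
qed

lemma bA_carrier: "bA A B C OL l \<in> carrier_mat (p*l + m*l) (p*l + m*l)"
  unfolding bA_def using bF_carrier mult_carrier_mat[OF bL_carrier bZ_carrier] by simp

lemma bH_mult_append_vec:
  assumes x: "x \<in> carrier_vec n" and u: "u \<in> carrier_vec (m*l)"
  shows "bH A B C l *\<^sub>v (x @\<^sub>v u) = (obs_mat A C l *\<^sub>v x + toep_mat A B C l *\<^sub>v u) @\<^sub>v u"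
proof -
  have "0\<^sub>m (m*l) n *\<^sub>v x + 1\<^sub>m (m*l) *\<^sub>v u = u"
    using x u by (intro eq_vecI) auto
  then show ?thesis unfolding bH_def
    using four_block_mat_mult_vec[OF obs_mat_carrier toep_mat_carrier zero_carrier_mat one_carrier_mat x u]
    by simp
qed

lemma bZ_mult_output_stack:
  assumes x: "x \<in> carrier_vec n" and u: "u \<in> carrier_vec (m*l)"
  shows "bZ A B C OL l *\<^sub>v ((obs_mat A C l *\<^sub>v x + toep_mat A B C l *\<^sub>v u) @\<^sub>v u)
    = C *\<^sub>v trajectory A B x (vec_block m u) l"
proof -
  let ?O = "obs_mat A C l" and ?T = "toep_mat A B C l" and ?P = "C * A ^\<^sub>m l"
  let ?w = "?P *\<^sub>v (OL *\<^sub>v (?T *\<^sub>v u))"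
  have P: "?P \<in> carrier_mat p n" using C_carrier A_carrier by simp
  have Ox: "?O *\<^sub>v x \<in> carrier_vec (p*l)" and Tu: "?T *\<^sub>v u \<in> carrier_vec (p*l)"
    using mult_mat_vec_carrier[OF obs_mat_carrier x] mult_mat_vec_carrier[OF toep_mat_carrier u] .
  have OLO: "OL *\<^sub>v (?O *\<^sub>v x) = x"
    using assoc_mult_mat_vec[OF OL_carrier obs_mat_carrier x, symmetric] OL_obs_mat x by simp
  have "?P * OL * ?T \<in> carrier_mat p (m*l)"
    using mult_carrier_mat[OF mult_carrier_mat[OF P OL_carrier] toep_mat_carrier] .
  moreover have "C * ctrb_mat A B l \<in> carrier_mat p (m*l)"
    using mult_carrier_mat[OF C_carrier ctrb_mat_carrier] .
  ultimately have "bZ A B C OL l *\<^sub>v ((?O *\<^sub>v x + ?T *\<^sub>v u) @\<^sub>v u)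
      = (?P * OL) *\<^sub>v (?O *\<^sub>v x + ?T *\<^sub>v u) + (C * ctrb_mat A B l - ?P * OL * ?T) *\<^sub>v u"
    unfolding bZ_def using Ox Tu u P OL_carrier
    by (intro hcat_mult_append_vec) (auto intro: minus_carrier_mat)
  also have "(?P * OL) *\<^sub>v (?O *\<^sub>v x + ?T *\<^sub>v u) = ?P *\<^sub>v x + ?w"
    using assoc_mult_mat_vec[OF P OL_carrier add_carrier_vec[OF Ox Tu]]
      mult_add_distrib_mat_vec[OF OL_carrier Ox Tu] OLO
      mult_add_distrib_mat_vec[OF P x mult_mat_vec_carrier[OF OL_carrier Tu]]
    by simp
  also have "(C * ctrb_mat A B l - ?P * OL * ?T) *\<^sub>v u = C *\<^sub>v (ctrb_mat A B l *\<^sub>v u) - ?w"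
    using minus_mult_distrib_mat_vec[OF \<open>C * ctrb_mat A B l \<in> _\<close> \<open>?P * OL * ?T \<in> _\<close> u]
      assoc_mult_mat_vec[OF C_carrier ctrb_mat_carrier u]
      assoc_mult_mat_vec[OF mult_carrier_mat[OF P OL_carrier] toep_mat_carrier u]
      assoc_mult_mat_vec[OF P OL_carrier Tu]
    by simp
  also have "?P *\<^sub>v x + ?w + (C *\<^sub>v (ctrb_mat A B l *\<^sub>v u) - ?w) = ?P *\<^sub>v x + C *\<^sub>v (ctrb_mat A B l *\<^sub>v u)"
    using P x C_carrier ctrb_mat_carrier u OL_carrier Tu by (intro eq_vecI) auto
  also have "ctrb_mat A B l *\<^sub>v u = trajectory A B (0\<^sub>v n) (vec_block m u) l"
    by (rule ctrb_mat_mult_vec[OF A_carrier B_carrier u])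
  also have "?P *\<^sub>v x + C *\<^sub>v trajectory A B (0\<^sub>v n) (vec_block m u) l
      = C *\<^sub>v (A ^\<^sub>m l *\<^sub>v x + trajectory A B (0\<^sub>v n) (vec_block m u) l)"
    using assoc_mult_mat_vec[OF C_carrier pow_carrier_mat[OF A_carrier] x]
      mult_add_distrib_mat_vec[OF C_carrier mult_mat_vec_carrier[OF pow_carrier_mat[OF A_carrier] x]
        trajectory_carrier[where vs = "vec_block m u", OF A_carrier B_carrier zero_carrier_vec vec_block_carrier]]
    by simp
  also have "A ^\<^sub>m l *\<^sub>v x + trajectory A B (0\<^sub>v n) (vec_block m u) l = trajectory A B x (vec_block m u) l"
    by (rule trajectory_superposition[where vs = "vec_block m u", OF A_carrier B_carrier x vec_block_carrier, symmetric])
  finally show ?thesis .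
qed

lemma bA_bH_step:
  assumes x: "x \<in> carrier_vec n" and u: "u \<in> carrier_vec (m*l)" and v: "v \<in> carrier_vec m"
  shows "bA A B C OL l *\<^sub>v (bH A B C l *\<^sub>v (x @\<^sub>v u)) + bB p m l *\<^sub>v v
    = bH A B C l *\<^sub>v ((A *\<^sub>v x + B *\<^sub>v vec_block m u 0) @\<^sub>v shift_in m l u v)"
proof -
  let ?Y = "obs_mat A C l *\<^sub>v x + toep_mat A B C l *\<^sub>v u"
  let ?z = "C *\<^sub>v trajectory A B x (vec_block m u) l"
  have Y: "?Y \<in> carrier_vec (p*l)"
    using mult_mat_vec_carrier[OF obs_mat_carrier x] mult_mat_vec_carrier[OF toep_mat_carrier u] by simp
  have z: "?z \<in> carrier_vec p"
    using mult_mat_vec_carrier[OF C_carrier trajectory_carrier[where vs = "vec_block m u",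
          OF A_carrier B_carrier x vec_block_carrier]] .
  have Yu: "?Y @\<^sub>v u \<in> carrier_vec (p*l + m*l)" using Y u by simp
  have "bA A B C OL l *\<^sub>v (?Y @\<^sub>v u) = bF p m l *\<^sub>v (?Y @\<^sub>v u) + bL p m l *\<^sub>v ?z"
    using add_mult_distrib_mat_vec[OF bF_carrier mult_carrier_mat[OF bL_carrier bZ_carrier] Yu]
      assoc_mult_mat_vec[OF bL_carrier bZ_carrier Yu] bZ_mult_output_stack[OF x u]
    unfolding bA_def by simp
  then have "bA A B C OL l *\<^sub>v (?Y @\<^sub>v u) + bB p m l *\<^sub>v v = shift_in p l ?Y ?z @\<^sub>v shift_in m l u v"
    using bF_bL_bB_mult_vec[OF Y u z v] by simp
  then show ?thesis
    using bH_mult_append_vec x u v A_carrier B_carrier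
    by (simp add: shift_in_output_stack)
qed

lemma lifted_trajectory:
  assumes "0 < l" and vs: "\<And>j. vs j \<in> carrier_vec m"
  shows "trajectory (bA A B C OL l) (bB p m l) (0\<^sub>v (p*l + m*l)) vs k
    = bH A B C l *\<^sub>v (trajectory A B (0\<^sub>v n) vs (k - l) @\<^sub>v input_window m l vs k)"
proof (induction k)
  case 0
  have "0\<^sub>v n @\<^sub>v 0\<^sub>v (m*l) = (0\<^sub>v (n + m*l) :: real vec)" by (intro eq_vecI) auto
  moreover have "bH A B C l *\<^sub>v 0\<^sub>v (n + m*l) = 0\<^sub>v (p*l + m*l)"
    using bH_carrier by (intro eq_vecI) auto
  ultimately show ?case by (simp only: trajectory.simps(1) diff_0_eq_0 input_window_0)
next
  case (Suc k)
  let ?x = "trajectory A B (0\<^sub>v n) vs (k - l)" and ?u = "input_window m l vs k"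
  have x: "?x \<in> carrier_vec n"
    using trajectory_carrier[OF A_carrier B_carrier zero_carrier_vec vs] .
  have "A *\<^sub>v ?x + B *\<^sub>v vec_block m ?u 0 = trajectory A B (0\<^sub>v n) vs (Suc k - l)"
  proof (cases "l \<le> k")
    case True
    then show ?thesis
      using vec_block_input_window_0[where vs = vs, OF \<open>0 < l\<close> vs] by (simp add: Suc_diff_le)
  next
    case False
    have "A *\<^sub>v 0\<^sub>v n + B *\<^sub>v 0\<^sub>v m = 0\<^sub>v n"
      using A_carrier B_carrier by (intro eq_vecI) auto
    then show ?thesis
      using False vec_block_input_window_0[where vs = vs, OF \<open>0 < l\<close> vs] by simp
  qed
  then show ?case
    using Suc bA_bH_step[OF x input_window_carrier vs[of k]]
    by (simp add: shift_in_input_window[OF \<open>0 < l\<close>])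
qed

lemma reach_subspace_subset_im_bH:
  assumes "0 < l"
  shows "reach_subspace (bA A B C OL l) (bB p m l) \<subseteq> im_mat (bH A B C l)"
  using reach_subspace_eq_trajectories[OF bA_carrier bB_carrier] lifted_trajectory[OF assms]
    mult_mat_vec_mem_im_mat[OF bH_carrier] trajectory_carrier[OF A_carrier B_carrier zero_carrier_vec]
  by auto

lemma im_bH_subset_reach_subspace:
  assumes "0 < l" and q: "n + l \<le> p*l + m*l" and ctrb: "im_mat (ctrb_mat A B n) = carrier_vec n"
  shows "im_mat (bH A B C l) \<subseteq> reach_subspace (bA A B C OL l) (bB p m l)"
proof
  let ?q = "p*l + m*l"
  fix y assume "y \<in> im_mat (bH A B C l)"
  then obtain w where w: "w \<in> carrier_vec (n + m*l)" and y: "y = bH A B C l *\<^sub>v w"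
    unfolding im_mat_eq[OF bH_carrier] by auto
  define x u where "x = vec_first w n" and "u = vec_last w (m*l)"
  have u: "u \<in> carrier_vec (m*l)" unfolding u_def by simp
  have "x \<in> im_mat (ctrb_mat A B n)"
    using ctrb unfolding x_def by simp
  then obtain z where z: "z \<in> carrier_vec (m*n)" and x: "ctrb_mat A B n *\<^sub>v z = x"
    unfolding im_mat_eq[OF ctrb_mat_carrier] by auto
  define d where "d = ?q - (n + l)"
  define vs where "vs j = (if j < d then 0\<^sub>v m
    else if j < d + n then vec_block m z (j - d) else vec_block m u (j - d - n))" for j
  have vs: "vs j \<in> carrier_vec m" for j
    unfolding vs_def by simp
  have "trajectory A B (0\<^sub>v n) vs (d + n) = trajectory A B (0\<^sub>v n) (\<lambda>j. vs (d + j)) n"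
    by (rule trajectory_zero_prefix[OF A_carrier B_carrier]) (simp add: vs_def)
  also have "\<dots> = trajectory A B (0\<^sub>v n) (vec_block m z) n"
    by (rule trajectory_cong) (simp add: vs_def)
  also have "\<dots> = x"
    using ctrb_mat_mult_vec[OF A_carrier B_carrier z] x by simp
  finally have "trajectory A B (0\<^sub>v n) vs (?q - l) = x"
    using q by (simp add: d_def)
  moreover have "input_window m l vs ?q = u"
    using q by (intro input_window_eq[OF _ u]) (auto simp: vs_def d_def)
  moreover have "w = x @\<^sub>v u"
    using w unfolding x_def u_def by simp
  ultimately have "y = trajectory (bA A B C OL l) (bB p m l) (0\<^sub>v ?q) vs ?q"
    using y lifted_trajectory[OF \<open>0 < l\<close> vs] by simp
  then show "y \<in> reach_subspace (bA A B C OL l) (bB p m l)"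
    unfolding reach_subspace_eq_trajectories[OF bA_carrier bB_carrier] using vs by blast
qed

lemma im_bH_eq_reach_subspace:
  assumes "n + l \<le> p*l + m*l" and "im_mat (ctrb_mat A B n) = carrier_vec n"
  shows "im_mat (bH A B C l) = reach_subspace (bA A B C OL l) (bB p m l)"
proof (cases "l = 0")
  case True
  have "bH A B C l \<in> carrier_mat 0 (n + m*l)"
    using True bH_carrier by simp
  moreover have "dim_row (bA A B C OL l) = 0"
    using True bA_carrier by simp
  then have "ctrb_mat (bA A B C OL l) (bB p m l) (dim_row (bA A B C OL l)) \<in> carrier_mat 0 0"
    using ctrb_mat_carrier_mat[of "bA A B C OL l" "bB p m l" 0] by simp
  ultimately show ?thesis
    unfolding reach_subspace_def by (simp add: im_mat_zero_rows)
next
  case False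
  then show ?thesis
    using assms im_bH_subset_reach_subspace reach_subspace_subset_im_bH by blast
qed

end

theorem lemma1:
  fixes A B C OL :: "real mat" and n m p :: nat
  assumes "A \<in> carrier_mat n n" and "B \<in> carrier_mat n m" and "C \<in> carrier_mat p n"
    and "observable A C" and "reachable A B"
    and "OL \<in> carrier_mat n (p * obs_index A C)"
    and "OL * obs_mat A C (obs_index A C) = 1\<^sub>m n"
  shows "im_mat (bH A B C (obs_index A C)) = reach_subspace (bA A B C OL (obs_index A C)) (bB p m (obs_index A C))"
proof -
  define l where "l = obs_index A C"
  interpret lifted_system A B C n m p OL l
    using assms unfolding l_def by unfold_locales
  have "n + l \<le> p*l + m*l"
    using obs_index_bound assms(4,5) unfolding l_def .
  moreover have "im_mat (ctrb_mat A B n) = carrier_vec n"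
    using im_mat_full_rank[OF ctrb_mat_carrier] assms(5) unfolding reachable_def by simp
  ultimately show ?thesis
    using im_bH_eq_reach_subspace unfolding l_def by blast
qed

end
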